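(* Let $m\ge1$ and $2\le K\le N$ be integers with $m^2(K-1)-mN\ne0$. Put $$\Delta=(m(K-1))^2+(N-K+1)\big(m^2(K-1)-mN\big),$$ assume $\Delta\ge0$, and define $$x_0=\frac{-m(K-1)+\sqrt{\Delta}}{m^2(K-1)-mN},\qquad d=\frac{Nm}{m+\frac1{x_0}}.$$ Assume $0<x_0\le\frac12$ and $d\le N$. Use the multiplicity assignment with coefficient $t=x_0$ (received symbol multiplicity $M>0$, each 1-bit-flipped neighbour multiplicity $tM$, others $0$). Then for every transmitted codeword and every error pattern of the binary symmetric channel flipping at most $d$ bits in total, the ASD sufficient condition $S\ge\sqrt{2(K-1)C}$ holds, i.e., ASD is guaranteed to decode up to $d$ bit errors.
   Context: Setting: a Reed–Solomon code of length $N$ and dimension $K$ over $GF(2^m)$ whose symbols are sent as $m$ bits each over a binary symmetric channel. The multiplicity assignment is fixed independently of the received word: in each position the received symbol gets multiplicity $M$, each of the $m$ symbols obtained from it by flipping exactly one bit gets multiplicity $tM$ ($0\le t\le1$), and all other symbols get $0$. The score $S$ is the sum over the $N$ positions of the multiplicity assigned to the transmitted symbol; the (large-multiplicity approximation of the) cost is $C=\frac12\sum(\text{multiplicities})^2=\frac N2M^2(1+mt^2)$. *)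

theory Defs
  imports Complex_Main
begin

text \<open>A symbol of GF(2^m) is represented by its m-bit binary image, a bool list of length m.\<close>

definition symbols :: "nat \<Rightarrow> bool list set" where
  "symbols m = {s. length s = m}"

definition bit_dist :: "bool list \<Rightarrow> bool list \<Rightarrow> nat" where
  "bit_dist x y = card {j. j < length x \<and> x ! j \<noteq> y ! j}"

definition mult :: "real \<Rightarrow> real \<Rightarrow> bool list \<Rightarrow> bool list \<Rightarrow> real" where
  "mult M t r s = (if s = r then M else if bit_dist r s = 1 then t * M else 0)"

definition score :: "nat \<Rightarrow> real \<Rightarrow> real \<Rightarrow> (nat \<Rightarrow> bool list) \<Rightarrow> (nat \<Rightarrow> bool list) \<Rightarrow> real" where
  "score N M t r c = (\<Sum>i<N. mult M t (r i) (c i))"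

text \<open>Cost (large-multiplicity approximation): half the sum of squared multiplicities.\<close>
definition cost :: "nat \<Rightarrow> nat \<Rightarrow> real \<Rightarrow> real \<Rightarrow> (nat \<Rightarrow> bool list) \<Rightarrow> real" where
  "cost N m M t r = (1/2) * (\<Sum>i<N. \<Sum>s\<in>symbols m. (mult M t (r i) s)^2)"

definition bit_errors :: "nat \<Rightarrow> (nat \<Rightarrow> bool list) \<Rightarrow> (nat \<Rightarrow> bool list) \<Rightarrow> nat" where
  "bit_errors N r c = (\<Sum>i<N. bit_dist (r i) (c i))"

end

theory Submission
  imports Defs
begin

text \<open>Position by position the multiplicity of the transmitted symbol is at least
  \<open>M - (1 - t) M e\<close>, where \<open>e\<close> is the number of bit errors in that position (for \<open>e \<ge> 2\<close>
  this uses \<open>t \<le> 1/2\<close>), so with at most \<open>d = N m t / (1 + m t)\<close> bit errors the score is at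
  least \<open>N M (1 + m t\<^sup>2) / (1 + m t)\<close>. The cost is \<open>N M\<^sup>2 (1 + m t\<^sup>2) / 2\<close>, and
  \<open>x\<^sub>0\<close> is the positive root of \<open>a t\<^sup>2 + 2 m (K - 1) t = N - K + 1\<close> with
  \<open>a = m\<^sup>2 (K - 1) - m N\<close>, which is equivalent to \<open>(K - 1) (1 + m t)\<^sup>2 = N (1 + m t\<^sup>2)\<close>.
  This identity makes \<open>\<surd>(2 (K - 1) C)\<close> equal to that lower bound for the score.\<close>

lemma bit_dist_self [simp]: "bit_dist r r = 0"
  unfolding bit_dist_def by simp

lemma bit_dist_eq_0_imp_eq:
  assumes "length s = length r" "bit_dist r s = 0"
  shows "s = r"
proof (rule nth_equalityI)
  have "{j. j < length r \<and> r ! j \<noteq> s ! j} = {}"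
    using assms(2) unfolding bit_dist_def by simp
  then show "\<And>i. i < length s \<Longrightarrow> s ! i = r ! i"
    using assms(1) by auto
qed (rule assms(1))

definition flip_bit :: "bool list \<Rightarrow> nat \<Rightarrow> bool list" where
  "flip_bit r j = r[j := \<not> r ! j]"

lemma length_flip_bit [simp]: "length (flip_bit r j) = length r"
  by (simp add: flip_bit_def)

lemma bit_dist_flip_bit:
  assumes "j < length r"
  shows "bit_dist r (flip_bit r j) = 1"
proof -
  have "{k. k < length r \<and> r ! k \<noteq> flip_bit r j ! k} = {j}"
    using assms by (auto simp: flip_bit_def nth_list_update)
  then show ?thesis
    unfolding bit_dist_def by simp
qed

lemma bit_dist_eq_1_imp_flip_bit:
  assumes "length s = length r" "bit_dist r s = 1"
  obtains j where "j < length r" "s = flip_bit r j"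
proof -
  obtain j where j: "{k. k < length r \<and> r ! k \<noteq> s ! k} = {j}"
    using assms(2) unfolding bit_dist_def by (rule card_1_singletonE)
  then have "j < length r" and "r ! j \<noteq> s ! j"
    by auto
  moreover have "s = flip_bit r j"
  proof (rule nth_equalityI)
    show "length s = length (flip_bit r j)"
      using assms(1) by simp
    show "s ! i = flip_bit r j ! i" if "i < length s" for i
      using that j \<open>r ! j \<noteq> s ! j\<close> assms(1)
      by (cases "i = j") (auto simp: flip_bit_def nth_list_update)
  qed
  ultimately show ?thesis
    using that by blast
qed

lemma inj_on_flip_bit: "inj_on (flip_bit r) {..<length r}"
proof (rule inj_onI)
  fix i j
  assume "i \<in> {..<length r}" and flip_eq: "flip_bit r i = flip_bit r j"
  have "flip_bit r i ! i \<noteq> r ! i"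
    using \<open>i \<in> {..<length r}\<close> by (simp add: flip_bit_def)
  then show "i = j"
    using flip_eq by (metis flip_bit_def nth_list_update_neq)
qed

lemma finite_symbols: "finite (symbols m)"
  using finite_lists_length_eq[of "UNIV :: bool set" m] by (simp add: symbols_def)

lemma card_bit_dist_eq_1:
  assumes "r \<in> symbols m"
  shows "card {s \<in> symbols m. bit_dist r s = 1} = m"
proof -
  have "{s \<in> symbols m. bit_dist r s = 1} = flip_bit r ` {..<m}"
    using assms bit_dist_flip_bit
    by (auto simp: symbols_def elim!: bit_dist_eq_1_imp_flip_bit)
  then show ?thesis
    using assms inj_on_flip_bit[of r] by (simp add: card_image symbols_def)
qed

lemma sum_mult_squared:
  assumes "r \<in> symbols m"
  shows "(\<Sum>s\<in>symbols m. (mult M t r s)\<^sup>2) = M\<^sup>2 + real m * (t * M)\<^sup>2"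
proof -
  have "(\<Sum>s\<in>symbols m. (mult M t r s)\<^sup>2)
      = (\<Sum>s\<in>symbols m. if s = r then M\<^sup>2 else 0)
        + (\<Sum>s\<in>symbols m. if bit_dist r s = 1 then (t * M)\<^sup>2 else 0)"
    by (subst sum.distrib[symmetric], rule sum.cong) (auto simp: mult_def)
  also have "\<dots> = M\<^sup>2 + real (card {s \<in> symbols m. bit_dist r s = 1}) * (t * M)\<^sup>2"
    using assms finite_symbols by (simp add: sum.If_cases Int_def conj_commute)
  also have "card {s \<in> symbols m. bit_dist r s = 1} = m"
    using assms by (rule card_bit_dist_eq_1)
  finally show ?thesis .
qed

lemma cost_eq:
  assumes "\<forall>i<N. r i \<in> symbols m"
  shows "cost N m M t r = real N * M\<^sup>2 * (1 + real m * t\<^sup>2) / 2"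
  using assms by (simp add: cost_def sum_mult_squared algebra_simps power_mult_distrib)

lemma mult_ge_bit_dist:
  assumes "length c = length r" "M \<ge> 0" "t \<le> 1/2"
  shows "M - (1 - t) * M * real (bit_dist r c) \<le> mult M t r c"
proof (cases "bit_dist r c")
  case 0
  then show ?thesis
    using assms(1) bit_dist_eq_0_imp_eq by (simp add: mult_def)
next
  case (Suc e)
  have "c \<noteq> r"
    using Suc by auto
  show ?thesis
  proof (cases e)
    case 0
    then show ?thesis
      using Suc \<open>c \<noteq> r\<close> by (simp add: mult_def algebra_simps)
  next
    case (Suc _)
    have "M * (2 * t) \<le> M * 1"
      using assms(2,3) by (intro mult_left_mono) auto
    then have "M \<le> (1 - t) * M * 2"
      by (simp add: algebra_simps)
    also have "\<dots> \<le> (1 - t) * M * real (bit_dist r c)"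
      using \<open>bit_dist r c = Suc e\<close> Suc assms(2,3) by (intro mult_left_mono) auto
    finally show ?thesis
      using \<open>c \<noteq> r\<close> \<open>bit_dist r c = Suc e\<close> Suc by (simp add: mult_def)
  qed
qed

lemma score_ge_bit_errors:
  assumes "\<forall>i<N. c i \<in> symbols m" "\<forall>i<N. r i \<in> symbols m" "M \<ge> 0" "t \<le> 1/2"
  shows "real N * M - (1 - t) * M * real (bit_errors N r c) \<le> score N M t r c"
proof -
  have "real N * M - (1 - t) * M * real (bit_errors N r c)
      = (\<Sum>i<N. M - (1 - t) * M * real (bit_dist (r i) (c i)))"
    by (simp add: bit_errors_def sum_subtractf sum_distrib_left)
  also have "\<dots> \<le> score N M t r c"
    unfolding score_def using assms by (intro sum_mono mult_ge_bit_dist) (auto simp: symbols_def)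
  finally show ?thesis .
qed

lemma score_ge_of_bit_errors_le:
  assumes "\<forall>i<N. c i \<in> symbols m" "\<forall>i<N. r i \<in> symbols m" "M \<ge> 0" "0 < t" "t \<le> 1/2"
    and "real (bit_errors N r c) \<le> real N * real m / (real m + 1 / t)"
  shows "real N * M * (1 + real m * t\<^sup>2) / (1 + real m * t) \<le> score N M t r c"
proof -
  have pos: "1 + real m * t > 0"
    using assms(4) by (simp add: add_pos_nonneg)
  have "real N * M * (1 + real m * t\<^sup>2) / (1 + real m * t)
      = real N * M - (1 - t) * M * (real N * real m / (real m + 1 / t))"
    using pos assms(4) by (simp add: field_simps power2_eq_square)
  also have "\<dots> \<le> real N * M - (1 - t) * M * real (bit_errors N r c)"
    using assms(3,5,6) by (intro diff_left_mono mult_left_mono) auto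
  also have "\<dots> \<le> score N M t r c"
    using assms(1-3,5) by (rule score_ge_bit_errors)
  finally show ?thesis .
qed

lemma quadratic_root_eq:
  fixes a b c :: real
  assumes "a \<noteq> 0" "0 \<le> b\<^sup>2 + a * c"
  defines "x \<equiv> (- b + sqrt (b\<^sup>2 + a * c)) / a"
  shows "a * x\<^sup>2 + 2 * b * x = c"
proof -
  have "(a * x + b)\<^sup>2 = b\<^sup>2 + a * c"
    using assms by (simp add: x_def)
  then have "a * (a * x\<^sup>2 + 2 * b * x - c) = 0"
    by (simp add: algebra_simps power2_eq_square)
  then show ?thesis
    using assms(1) by simp
qed

lemma sqrt_cost_eq:
  assumes "\<forall>i<N. r i \<in> symbols m" "M \<ge> 0" "t > 0"
    and balance: "(real K - 1) * (1 + real m * t)\<^sup>2 = real N * (1 + real m * t\<^sup>2)"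
  shows "sqrt (2 * (real K - 1) * cost N m M t r) = real N * M * (1 + real m * t\<^sup>2) / (1 + real m * t)"
proof -
  have pos: "1 + real m * t > 0"
    using assms(3) by (simp add: add_pos_nonneg)
  have "2 * (real K - 1) * cost N m M t r = (real K - 1) * real N * M\<^sup>2 * (1 + real m * t\<^sup>2)"
    using assms(1) by (simp add: cost_eq field_simps)
  also have "\<dots> = (real N * M * (1 + real m * t\<^sup>2) / (1 + real m * t))\<^sup>2"
  proof -
    have "real K - 1 = real N * (1 + real m * t\<^sup>2) / (1 + real m * t)\<^sup>2"
      using balance pos by (simp add: field_simps)
    then show ?thesis
      by (simp add: power2_eq_square field_simps)
  qed
  finally show ?thesis
    using assms(2,3) by simp
qed

text \<open>The hypotheses \<open>m \<ge> 1\<close>, \<open>2 \<le> K \<le> N\<close> and \<open>d \<le> N\<close> only make the setting meaningful;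
  the argument does not need them.\<close>

theorem theorem2:
  fixes m K N :: nat and M :: real
    and c r :: "nat \<Rightarrow> bool list"
  assumes "m \<ge> 1" and "2 \<le> K" and "K \<le> N"
    and "real m ^ 2 * (real K - 1) - real m * real N \<noteq> 0"
    and "(real m * (real K - 1))^2 + (real N - real K + 1) * (real m ^ 2 * (real K - 1) - real m * real N) \<ge> 0"
    and "0 < (- real m * (real K - 1) + sqrt ((real m * (real K - 1))^2 + (real N - real K + 1) * (real m ^ 2 * (real K - 1) - real m * real N)))
              / (real m ^ 2 * (real K - 1) - real m * real N)"
    and "(- real m * (real K - 1) + sqrt ((real m * (real K - 1))^2 + (real N - real K + 1) * (real m ^ 2 * (real K - 1) - real m * real N)))
              / (real m ^ 2 * (real K - 1) - real m * real N) \<le> 1/2"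
    and "real N * real m / (real m + 1 / ((- real m * (real K - 1) + sqrt ((real m * (real K - 1))^2 + (real N - real K + 1) * (real m ^ 2 * (real K - 1) - real m * real N)))
              / (real m ^ 2 * (real K - 1) - real m * real N))) \<le> real N"
    and "M > 0"
    and "\<forall>i<N. c i \<in> symbols m" and "\<forall>i<N. r i \<in> symbols m"
    and "real (bit_errors N r c) \<le> real N * real m / (real m + 1 / ((- real m * (real K - 1) + sqrt ((real m * (real K - 1))^2 + (real N - real K + 1) * (real m ^ 2 * (real K - 1) - real m * real N)))
              / (real m ^ 2 * (real K - 1) - real m * real N)))"
  shows "let t = (- real m * (real K - 1) + sqrt ((real m * (real K - 1))^2 + (real N - real K + 1) * (real m ^ 2 * (real K - 1) - real m * real N)))
              / (real m ^ 2 * (real K - 1) - real m * real N)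
         in score N M t r c \<ge> sqrt (2 * (real K - 1) * cost N m M t r)"
proof -
  define a where "a = real m ^ 2 * (real K - 1) - real m * real N"
  define t where "t = (- (real m * (real K - 1)) + sqrt ((real m * (real K - 1))\<^sup>2 + a * (real N - real K + 1))) / a"
  have t_eq: "t = (- real m * (real K - 1) + sqrt ((real m * (real K - 1))^2 + (real N - real K + 1) * (real m ^ 2 * (real K - 1) - real m * real N)))
              / (real m ^ 2 * (real K - 1) - real m * real N)"
    by (simp add: t_def a_def mult.commute)
  have "a * t\<^sup>2 + 2 * (real m * (real K - 1)) * t = real N - real K + 1"
    unfolding t_def using assms(4,5) by (intro quadratic_root_eq) (simp_all add: a_def mult.commute)
  then have "(real K - 1) * (1 + real m * t)\<^sup>2 = real N * (1 + real m * t\<^sup>2)"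
    by (simp add: a_def algebra_simps power2_eq_square)
  then have "sqrt (2 * (real K - 1) * cost N m M t r) = real N * M * (1 + real m * t\<^sup>2) / (1 + real m * t)"
    using assms(6,9,11) by (intro sqrt_cost_eq) (simp_all add: t_eq)
  also have "\<dots> \<le> score N M t r c"
    using assms(6,7,9-12) by (intro score_ge_of_bit_errors_le) (simp_all add: t_eq)
  finally show ?thesis
    by (simp add: t_eq)
qed

end
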